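(* For all $n\ge 0$, $$S_n(x)=\frac{1}{2^n}\sum_{k=0}^n\binom{n}{k}\widehat{W}_k(2x)\,\widehat{W}_{n-k}(2x).$$
   Context: For a permutation $\pi$ of $[n]=\{1,\dots,n\}$, ${\rm des}(\pi)=\#\{i\in[n-1]:\pi(i)>\pi(i+1)\}$. A double descent is an index $i\in[n-2]$ with $\pi(i)>\pi(i+1)>\pi(i+2)$. The permutation $\pi$ is simsun if for every $k\in[n]$, the subword of $\pi$ consisting of the letters in $[k]$ (in order of appearance) has no double descents. Let $\mathcal{RS}_n$ be the set of simsun permutations of $[n]$ and $S_n(x)=\sum_{\pi\in\mathcal{RS}_n}x^{{\rm des}(\pi)}$, with $S_0(x)=1$. A left peak of $\pi\in\mathfrak S_n$ is an index $i\in[n-1]$ with $\pi(i-1)<\pi(i)>\pi(i+1)$, where $\pi(0)=0$; ${\rm lpk}(\pi)$ is the number of left peaks, and $\widehat W_n(x)=\sum_{\pi\in\mathfrak S_n}x^{{\rm lpk}(\pi)}$, with $\widehat W_0(x)=1$. *)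

theory Defs
  imports Complex_Main "HOL-Combinatorics.Permutations"
begin

definition perm_word :: "nat \<Rightarrow> (nat \<Rightarrow> nat) \<Rightarrow> nat list" where
  "perm_word n p = map p [1..<n+1]"

definition des_word :: "nat list \<Rightarrow> nat" where
  "des_word w = card {i. i + 1 < length w \<and> w ! i > w ! (i+1)}"

definition no_double_descent :: "nat list \<Rightarrow> bool" where
  "no_double_descent w \<longleftrightarrow>
     (\<forall>i. i + 2 < length w \<longrightarrow> \<not> (w ! i > w ! (i+1) \<and> w ! (i+1) > w ! (i+2)))"

definition simsun :: "nat \<Rightarrow> (nat \<Rightarrow> nat) \<Rightarrow> bool" where
  "simsun n p \<longleftrightarrow>
     (\<forall>k\<in>{1..n}. no_double_descent (filter (\<lambda>a. a \<le> k) (perm_word n p)))"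

definition des :: "nat \<Rightarrow> (nat \<Rightarrow> nat) \<Rightarrow> nat" where
  "des n p = des_word (perm_word n p)"

definition lpk :: "nat \<Rightarrow> (nat \<Rightarrow> nat) \<Rightarrow> nat" where
  "lpk n p = card {i\<in>{1..n-1}. (if i = 1 then 0 else p (i-1)) < p i \<and> p i > p (i+1)}"

(* S_n(x); for n = 0 the only permutation of the empty set gives 1 *)
definition S_poly :: "nat \<Rightarrow> real \<Rightarrow> real" where
  "S_poly n x = (\<Sum>p\<in>{p. p permutes {1..n} \<and> simsun n p}. x ^ des n p)"

definition W_hat :: "nat \<Rightarrow> real \<Rightarrow> real" where
  "W_hat n x = (\<Sum>p\<in>{p. p permutes {1..n}}. x ^ lpk n p)"

end

theory Submission
  imports Defs
begin

text \<open>
  Every permutation of [n+1] arises exactly once by inserting the letter n+1 into one of the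
  n+1 gaps of a permutation of [n]. For a word with d left peaks, 2d+1 of these insertions
  keep d left peaks and the other n-2d create one more, so
  W(n+1,y) = (1+ny) W(n,y) + 2y(1-y) W'(n,y).
  The insertion keeps a simsun word simsun iff it creates no double descent; for a simsun
  word with d descents, d+1 admissible insertions keep d descents, n-2d create one more and
  the remaining d are forbidden, so S(n+1,x) = (1+nx) S(n,x) + x(1-2x) S'(n,x).
  By the Leibniz rule the right-hand side of the theorem satisfies the same differential
  recurrence, and both sides equal 1 for n = 0.
\<close>

fun des_rec :: "nat list \<Rightarrow> nat" where
  "des_rec (a # b # r) = (if a > b then 1 else 0) + des_rec (b # r)"
| "des_rec _ = 0"

fun ndd_rec :: "nat list \<Rightarrow> bool" where
  "ndd_rec (a # b # c # r) \<longleftrightarrow> \<not> (a > b \<and> b > c) \<and> ndd_rec (b # c # r)"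
| "ndd_rec _ \<longleftrightarrow> True"

text \<open>\<open>lpk_after p w\<close> counts the left peaks of \<open>w\<close> when \<open>w\<close> is preceded by the letter \<open>p\<close>.\<close>

fun lpk_after :: "nat \<Rightarrow> nat list \<Rightarrow> nat" where
  "lpk_after p (a # b # r) = (if p < a \<and> a > b then 1 else 0) + lpk_after a (b # r)"
| "lpk_after p _ = 0"

fun insertions :: "nat \<Rightarrow> nat list \<Rightarrow> nat list list" where
  "insertions m [] = [[m]]"
| "insertions m (a # ys) = (m # a # ys) # map ((#) a) (insertions m ys)"

lemma card_Collect_nat_unfold:
  assumes "finite {i. P i}"
  shows "card {i. P i} = (if P 0 then 1 else 0) + card {i. P (Suc i)}"
proof -
  have split: "{i. P i} = (if P 0 then {0} else {}) \<union> Suc ` {i. P (Suc i)}"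
  proof (intro set_eqI iffI)
    fix x assume "x \<in> {i. P i}"
    then show "x \<in> (if P 0 then {0} else {}) \<union> Suc ` {i. P (Suc i)}"
      by (cases x) auto
  qed (auto split: if_splits)
  have "finite {i. P (Suc i)}"
    using finite_vimageI[OF assms, of Suc] by (simp add: vimage_def)
  then show ?thesis
    by (subst split, subst card_Un_disjoint) (auto simp: card_image)
qed

lemma des_word_eq_des_rec: "des_word w = des_rec w"
  unfolding des_word_def
proof (induction w rule: des_rec.induct)
  case (1 a b r)
  then show ?case by (subst card_Collect_nat_unfold) auto
qed auto

lemma no_double_descent_iff_ndd_rec: "no_double_descent w \<longleftrightarrow> ndd_rec w"
  unfolding no_double_descent_def
proof (induction w rule: ndd_rec.induct)
  case (1 a b c r)
  have all_nat_unfold: "(\<forall>i. Q i) \<longleftrightarrow> Q 0 \<and> (\<forall>i. Q (Suc i))" for Q :: "nat \<Rightarrow> bool"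
    by (metis not0_implies_Suc)
  show ?case by (subst all_nat_unfold) (use 1 in simp)
qed auto

lemma card_lpk_after:
  "card {j. j + 1 < length w \<and> (if j = 0 then p else w ! (j - 1)) < w ! j \<and> w ! j > w ! (j + 1)}
     = lpk_after p w"
proof (induction p w rule: lpk_after.induct)
  case (1 p a b r)
  have "card {j. j + 1 < length (a # b # r) \<and> (if j = 0 then p else (a # b # r) ! (j - 1)) < (a # b # r) ! j
      \<and> (a # b # r) ! j > (a # b # r) ! (j + 1)}
    = (if p < a \<and> a > b then 1 else 0) + card {j. j + 1 < length (b # r)
      \<and> (if j = 0 then a else (b # r) ! (j - 1)) < (b # r) ! j \<and> (b # r) ! j > (b # r) ! (j + 1)}"
    by (subst card_Collect_nat_unfold)
       (auto simp: nth_Cons split: nat.splits intro!: arg_cong[where f = card])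
  with 1 show ?case by simp
qed auto

lemma nth_perm_word: "j < n \<Longrightarrow> perm_word n p ! j = p (Suc j)"
  unfolding perm_word_def by (simp del: upt_Suc)

lemma length_perm_word: "length (perm_word n p) = n"
  by (simp add: perm_word_def)

lemma lpk_eq_lpk_after: "lpk n p = lpk_after 0 (perm_word n p)"
proof -
  let ?peak = "\<lambda>j. j + 1 < n \<and> (if j = 0 then 0 else p j) < p (Suc j) \<and> p (Suc j) > p (Suc (Suc j))"
  have "{i\<in>{1..n-1}. (if i = 1 then 0 else p (i - 1)) < p i \<and> p i > p (i + 1)} = Suc ` {j. ?peak j}"
  proof (intro set_eqI iffI)
    fix i assume "i \<in> {i\<in>{1..n-1}. (if i = 1 then 0 else p (i - 1)) < p i \<and> p i > p (i + 1)}"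
    then show "i \<in> Suc ` {j. ?peak j}"
      by (cases i) (auto simp: image_iff split: if_splits)
  qed (auto split: if_splits)
  moreover have "{j. j + 1 < length (perm_word n p) \<and> (if j = 0 then 0 else perm_word n p ! (j - 1))
      < perm_word n p ! j \<and> perm_word n p ! j > perm_word n p ! (j + 1)} = {j. ?peak j}"
    by (auto simp: nth_perm_word length_perm_word)
  ultimately show ?thesis
    unfolding lpk_def card_lpk_after[symmetric] by (simp add: card_image)
qed

lemma set_insertions: "set (insertions m ys) = {u @ m # v | u v. ys = u @ v}"
proof (induction ys)
  case (Cons a ys)
  have "set (insertions m (a # ys)) = insert (m # a # ys) ((#) a ` {u @ m # v | u v. ys = u @ v})"
    using Cons.IH by simp
  also have "\<dots> = {u @ m # v | u v. a # ys = u @ v}"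
  proof (intro set_eqI iffI)
    fix z assume "z \<in> {u @ m # v | u v. a # ys = u @ v}"
    then obtain u v where "a # ys = u @ v" "z = u @ m # v" by blast
    then show "z \<in> insert (m # a # ys) ((#) a ` {u @ m # v | u v. ys = u @ v})"
      by (cases u) auto
  qed (auto, metis append_Cons)
  finally show ?case .
qed simp

lemma removeAll_insertions: "m \<notin> set ys \<Longrightarrow> z \<in> set (insertions m ys) \<Longrightarrow> removeAll m z = ys"
  by (induction ys arbitrary: z) auto

lemma distinct_insertions: "m \<notin> set ys \<Longrightarrow> distinct (insertions m ys)"
  by (induction ys) (auto simp: distinct_map)

lemma insertions_hd: "z \<in> set (insertions m r) \<Longrightarrow> z \<noteq> [] \<and> (hd z = m \<or> r \<noteq> [] \<and> hd z = hd r)"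
  by (induction r) auto

definition gf :: "(nat list \<Rightarrow> nat) \<Rightarrow> nat list list \<Rightarrow> real \<Rightarrow> real" where
  "gf stat ws x = (\<Sum>w\<leftarrow>ws. x ^ stat w)"

definition gf_deriv :: "(nat list \<Rightarrow> nat) \<Rightarrow> nat list list \<Rightarrow> real \<Rightarrow> real" where
  "gf_deriv stat ws x = (\<Sum>w\<leftarrow>ws. real (stat w) * x ^ (stat w - 1))"

lemma gf_has_real_derivative: "(gf stat ws has_real_derivative gf_deriv stat ws x) (at x)"
  unfolding gf_def gf_deriv_def
  by (induction ws) (auto intro!: derivative_eq_intros)

lemma lpk_after_Cons_not_less: "\<not> p < b \<Longrightarrow> lpk_after p (b # r) = lpk_after b r"
  by (cases r) auto

lemma gf_lpk_after_insertions:
  fixes x :: real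
  assumes "p < m" "\<forall>a\<in>set ys. a < m"
  shows "gf (lpk_after p) (insertions m ys) x =
    (2 * lpk_after p ys + 1) * x ^ lpk_after p ys
    + (real (length ys) - 2 * lpk_after p ys) * x ^ (lpk_after p ys + 1)"
  using assms
proof (induction p ys rule: lpk_after.induct)
  case (1 p a b r)
  have m: "a < m" "b < m" using "1.prems" by auto
  define l where "l = lpk_after a (b # r)"
  define q where "q = lpk_after a (m # b # r)"
  define T where "T = (\<Sum>z\<leftarrow>insertions m r. x ^ lpk_after a (b # z))"
  have IH: "x ^ q + T = (2 * l + 1) * x ^ l + (real (length r) + 1 - 2 * l) * x ^ (l + 1)"
    using "1.IH" m "1.prems" unfolding gf_def q_def T_def l_def by (simp add: o_def)
  have q: "q = lpk_after b r + 1"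
    using m by (simp add: q_def lpk_after_Cons_not_less)
  have "gf (lpk_after p) (insertions m (a # b # r)) x
      = x ^ (l + 1) + x ^ q + x ^ (if p < a \<and> a > b then 1 else 0) * T"
    using m "1.prems" unfolding gf_def l_def q_def T_def
    by (simp add: o_def power_add sum_list_const_mult[symmetric] lpk_after_Cons_not_less)
  moreover have "x ^ (l + 1) + x ^ q + x ^ (if p < a \<and> a > b then 1 else 0) * T
      = (2 * lpk_after p (a # b # r) + 1) * x ^ lpk_after p (a # b # r)
        + (real (length (a # b # r)) - 2 * lpk_after p (a # b # r)) * x ^ (lpk_after p (a # b # r) + 1)"
  proof (cases "p < a \<and> a > b")
    case True
    then have ql: "q = l + 1" and lpk: "lpk_after p (a # b # r) = l + 1"
      using q by (simp_all add: l_def lpk_after_Cons_not_less)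
    have T: "T = (2 * l + 1) * x ^ l + (real (length r) + 1 - 2 * l) * x ^ (l + 1) - x ^ (l + 1)"
      using IH ql by simp
    show ?thesis unfolding T ql lpk if_P[OF True] by (simp add: algebra_simps)
  next
    case False
    then have lpk: "lpk_after p (a # b # r) = l" by (simp add: l_def)
    have T: "T = (2 * l + 1) * x ^ l + (real (length r) + 1 - 2 * l) * x ^ (l + 1) - x ^ q"
      using IH by simp
    show ?thesis unfolding T lpk if_not_P[OF False] by (simp add: algebra_simps)
  qed
  ultimately show ?case by simp
qed (auto simp: gf_def)

lemma ndd_rec_ConsD: "ndd_rec (a # ys) \<Longrightarrow> ndd_rec ys"
  by (cases ys rule: ndd_rec.cases) auto

text \<open>The head of \<open>z\<close> is \<open>m > b\<close> or the head of \<open>r\<close>, so \<open>a, b, hd z\<close> is never a new double descent.\<close>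

lemma ndd_rec_Cons_insertion:
  assumes "z \<in> set (insertions m r)" "ndd_rec (a # b # r)" "b < m"
  shows "ndd_rec (a # b # z) \<longleftrightarrow> ndd_rec (b # z)"
proof -
  obtain c z' where z: "z = c # z'"
    using insertions_hd[OF assms(1)] by (cases z) auto
  have "a > b \<Longrightarrow> \<not> b > c"
    using insertions_hd[OF assms(1)] assms(2,3) z by (cases r) auto
  with z show ?thesis by auto
qed

lemma gf_des_rec_ndd_insertions:
  fixes x :: real
  assumes "ndd_rec ys" "\<forall>a\<in>set ys. a < m"
  shows "gf des_rec (filter ndd_rec (insertions m ys)) x =
    (des_rec ys + 1) * x ^ des_rec ys + (real (length ys) - 2 * des_rec ys) * x ^ (des_rec ys + 1)"
  using assms unfolding gf_def sum_list_map_filter'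
proof (induction ys rule: des_rec.induct)
  case (1 a b r)
  have m: "a < m" "b < m" using "1.prems" by auto
  have nd: "ndd_rec (a # b # r)" using "1.prems" by simp
  define f where "f z = (if ndd_rec z then x ^ des_rec z else 0)" for z
  define d where "d = des_rec (b # r)"
  define T where "T = (\<Sum>z\<leftarrow>insertions m r. f (b # z))"
  have IH: "f (m # b # r) + T = (d + 1) * x ^ d + (real (length r) + 1 - 2 * d) * x ^ (d + 1)"
    using "1.IH" "1.prems" ndd_rec_ConsD[OF nd] unfolding T_def d_def f_def by (simp add: o_def)
  have "(\<Sum>z\<leftarrow>insertions m r. f (a # b # z)) = x ^ (if a > b then 1 else 0) * T"
    unfolding T_def sum_list_const_mult[symmetric]
    using ndd_rec_Cons_insertion[OF _ nd m(2)] by (auto simp: f_def power_add intro!: arg_cong[where f = sum_list])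
  then have "(\<Sum>z\<leftarrow>insertions m (a # b # r). f z) = f (m # a # b # r) + f (m # b # r) + x ^ (if a > b then 1 else 0) * T"
    using m by (simp add: o_def f_def)
  moreover have "f (m # a # b # r) + f (m # b # r) + x ^ (if a > b then 1 else 0) * T =
      (des_rec (a # b # r) + 1) * x ^ des_rec (a # b # r)
      + (real (length (a # b # r)) - 2 * des_rec (a # b # r)) * x ^ (des_rec (a # b # r) + 1)"
  proof (cases "a > b")
    case True
    have "ndd_rec (m # b # r)" using nd True by (cases r) auto
    then have f1: "f (m # a # b # r) = 0" and f2: "f (m # b # r) = x ^ (d + 1)"
      and des: "des_rec (a # b # r) = d + 1"
      using m True by (simp_all add: f_def d_def)
    have T: "T = (d + 1) * x ^ d + (real (length r) + 1 - 2 * d) * x ^ (d + 1) - x ^ (d + 1)"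
      using IH f2 by simp
    show ?thesis unfolding T f1 f2 des if_P[OF True] by (simp add: algebra_simps)
  next
    case False
    then have f1: "f (m # a # b # r) = x ^ (d + 1)" and des: "des_rec (a # b # r) = d"
      using m nd by (simp_all add: f_def d_def)
    have T: "T = (d + 1) * x ^ d + (real (length r) + 1 - 2 * d) * x ^ (d + 1) - f (m # b # r)"
      using IH by simp
    show ?thesis unfolding T f1 des if_not_P[OF False] by (simp add: algebra_simps)
  qed
  ultimately show ?case by (simp add: f_def)
qed auto

fun perm_words :: "nat \<Rightarrow> nat list list" where
  "perm_words 0 = [[]]"
| "perm_words (Suc n) = concat (map (insertions (Suc n)) (perm_words n))"

lemma set_perm_words: "set (perm_words n) = {ws. distinct ws \<and> set ws = {1..n}}"
proof (induction n)
  case (Suc n)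
  show ?case
  proof (intro set_eqI iffI)
    fix ws assume "ws \<in> set (perm_words (Suc n))"
    then obtain ys where "ys \<in> set (perm_words n)" "ws \<in> set (insertions (Suc n) ys)" by auto
    moreover from this obtain u v where "ys = u @ v" "ws = u @ Suc n # v"
      by (auto simp: set_insertions)
    ultimately have dist: "distinct (u @ v)" and set_uv: "set (u @ v) = {1..n}" and ws: "ws = u @ Suc n # v"
      by (simp_all add: Suc.IH)
    have "Suc n \<notin> set (u @ v)" unfolding set_uv by simp
    with dist ws have "distinct ws" by auto
    moreover have "set ws = insert (Suc n) (set (u @ v))" using ws by auto
    ultimately show "ws \<in> {ws. distinct ws \<and> set ws = {1..Suc n}}"
      unfolding set_uv by (simp add: atLeastAtMostSuc_conv)
  next
    fix ws assume ws: "ws \<in> {ws. distinct ws \<and> set ws = {1..Suc n}}"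
    then have "Suc n \<in> set ws" by simp
    then obtain u v where uv: "ws = u @ Suc n # v" by (meson split_list)
    have new: "Suc n \<notin> set (u @ v)" and dist: "distinct (u @ v)" using ws uv by auto
    have "set ws = insert (Suc n) (set (u @ v))" using uv by auto
    then have "set (u @ v) = set ws - {Suc n}" by (simp only: Diff_insert_absorb[OF new])
    also have "\<dots> = {1..n}" using ws by (simp add: atLeastAtMostSuc_conv)
    finally have "u @ v \<in> set (perm_words n)" using dist Suc.IH by simp
    moreover have "ws \<in> set (insertions (Suc n) (u @ v))" using uv set_insertions by blast
    ultimately show "ws \<in> set (perm_words (Suc n))" by auto
  qed
qed auto

lemma length_perm_words: "ws \<in> set (perm_words n) \<Longrightarrow> length ws = n"
  using distinct_card[of ws] by (auto simp: set_perm_words)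

lemma distinct_perm_words: "distinct (perm_words n)"
proof (induction n)
  case (Suc n)
  have new: "Suc n \<notin> set ys" if "ys \<in> set (perm_words n)" for ys
    using that by (auto simp: set_perm_words)
  have "inj_on (insertions (Suc n)) (set (perm_words n))"
  proof (rule inj_onI)
    fix ys zs assume "ys \<in> set (perm_words n)" "zs \<in> set (perm_words n)"
      and "insertions (Suc n) ys = insertions (Suc n) zs"
    moreover have "Suc n # ys \<in> set (insertions (Suc n) ys)" by (cases ys) auto
    ultimately show "ys = zs" using removeAll_insertions new by metis
  qed
  moreover have "insertions m ys \<noteq> []" for m ys by (cases ys) auto
  ultimately show ?case
    unfolding perm_words.simps distinct_concat_iff
    using Suc.IH distinct_insertions new removeAll_insertions
    by (auto simp: distinct_map distinct_removeAll) metis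
qed simp

lemma perm_word_bij_betw: "bij_betw (perm_word n) {p. p permutes {1..n}} (set (perm_words n))"
proof (rule bij_betw_imageI)
  show "inj_on (perm_word n) {p. p permutes {1..n}}"
  proof (rule inj_onI)
    fix p q assume "p \<in> {p. p permutes {1..n}}" "q \<in> {p. p permutes {1..n}}"
      and "perm_word n p = perm_word n q"
    then have "p i = q i" for i
      using permutes_not_in[of p "{1..n}" i] permutes_not_in[of q "{1..n}" i]
      by (cases "i \<in> {1..n}") (auto simp: perm_word_def map_eq_conv simp del: upt_Suc)
    then show "p = q" by auto
  qed
  show "perm_word n ` {p. p permutes {1..n}} = set (perm_words n)"
  proof (intro set_eqI iffI)
    fix ws assume "ws \<in> perm_word n ` {p. p permutes {1..n}}"
    then obtain p where p: "p permutes {1..n}" "ws = perm_word n p" by auto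
    have "set [1..<n+1] = {1..n}" by auto
    with p permutes_inj_on[OF p(1)] permutes_image[OF p(1)] show "ws \<in> set (perm_words n)"
      by (simp add: set_perm_words perm_word_def distinct_map del: upt_Suc)
  next
    fix ws assume ws: "ws \<in> set (perm_words n)"
    then have "length ws = n" by (rule length_perm_words)
    define p where "p i = (if i \<in> {1..n} then ws ! (i - 1) else i)" for i
    have "bij_betw (\<lambda>i. i - 1) {1..n} {..<n}"
      by (rule bij_betw_byWitness[where f' = Suc]) auto
    moreover have "bij_betw ((!) ws) {..<n} {1..n}"
      using ws \<open>length ws = n\<close> by (intro bij_betw_nth) (auto simp: set_perm_words)
    ultimately have "bij_betw p {1..n} {1..n}"
      using bij_betw_cong[of "{1..n}" p "\<lambda>i. ws ! (i - 1)"] bij_betw_trans by (auto simp: p_def o_def)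
    then have "p permutes {1..n}"
      by (rule bij_imp_permutes) (auto simp: p_def)
    moreover have "perm_word n p = ws"
      unfolding perm_word_def using \<open>length ws = n\<close>
      by (intro nth_equalityI) (auto simp: p_def simp del: upt_Suc)
    ultimately show "ws \<in> perm_word n ` {p. p permutes {1..n}}" by blast
  qed
qed

lemma sum_permutes_eq_sum_list_perm_words:
  "(\<Sum>p | p permutes {1..n}. g (perm_word n p)) = (\<Sum>w\<leftarrow>perm_words n. g w)"
  using sum.reindex_bij_betw[OF perm_word_bij_betw, of g] sum_list_distinct_conv_sum_set[OF distinct_perm_words, of g]
  by simp

definition simsun_word :: "nat \<Rightarrow> nat list \<Rightarrow> bool" where
  "simsun_word n w \<longleftrightarrow> (\<forall>k\<in>{1..n}. ndd_rec (filter (\<lambda>a. a \<le> k) w))"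

definition simsun_words :: "nat \<Rightarrow> nat list list" where
  "simsun_words n = filter (simsun_word n) (perm_words n)"

lemma simsun_word_insertion:
  assumes ys: "ys \<in> set (perm_words n)" and z: "z \<in> set (insertions (Suc n) ys)"
  shows "simsun_word (Suc n) z \<longleftrightarrow> simsun_word n ys \<and> ndd_rec z"
proof -
  have set_ys: "set ys = {1..n}" using ys by (simp add: set_perm_words)
  obtain u v where uv: "ys = u @ v" "z = u @ Suc n # v" using z set_insertions by blast
  have "\<forall>a\<in>set ys. a \<le> n" using set_ys by simp
  then have "\<forall>a\<in>set z. a \<le> Suc n" using uv by (auto simp: le_SucI)
  then have "filter (\<lambda>a. a \<le> Suc n) z = z" by (rule filter_True)
  moreover have "filter (\<lambda>a. a \<le> k) z = filter (\<lambda>a. a \<le> k) ys" if "k \<le> n" for k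
    using uv that by auto
  ultimately show ?thesis
    unfolding simsun_word_def by (auto simp: atLeastAtMostSuc_conv)
qed

lemma simsun_word_imp_ndd_rec:
  assumes "ys \<in> set (perm_words n)" "simsun_word n ys"
  shows "ndd_rec ys"
proof (cases n)
  case (Suc m)
  have "filter (\<lambda>a. a \<le> n) ys = ys" using assms(1) by (auto simp: set_perm_words filter_id_conv)
  with assms(2) Suc show ?thesis unfolding simsun_word_def by (metis atLeastAtMost_iff le_add1 order_refl plus_1_eq_Suc)
qed (use assms in simp)

lemma simsun_words_Suc:
  "simsun_words (Suc n) = concat (map (\<lambda>ys. filter ndd_rec (insertions (Suc n) ys)) (simsun_words n))"
proof -
  have concat_map_if: "concat (map (\<lambda>x. if P x then f x else []) xs) = concat (map f (filter P xs))"
    for P and f :: "nat list \<Rightarrow> nat list list" and xs by (induction xs) auto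
  have "simsun_words (Suc n)
      = concat (map (\<lambda>ys. filter (simsun_word (Suc n)) (insertions (Suc n) ys)) (perm_words n))"
    by (simp add: simsun_words_def filter_concat o_def)
  also have "\<dots> = concat (map (\<lambda>ys. if simsun_word n ys then filter ndd_rec (insertions (Suc n) ys) else [])
      (perm_words n))"
    by (intro arg_cong[where f = concat] map_cong refl) (auto simp: simsun_word_insertion intro: filter_cong)
  finally show ?thesis by (simp add: concat_map_if simsun_words_def)
qed

lemma gf_concat: "gf stat (concat wss) x = (\<Sum>ws\<leftarrow>wss. gf stat ws x)"
  by (induction wss) (simp_all add: gf_def)

lemma gf_gf_deriv_combination:
  "(\<Sum>w\<leftarrow>ws. a * x ^ stat w + b * (real (stat w) * x ^ (stat w - 1))) = a * gf stat ws x + b * gf_deriv stat ws x"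
  by (simp add: gf_def gf_deriv_def sum_list_addf sum_list_const_mult)

lemma gf_simsun_words_Suc:
  "gf des_rec (simsun_words (Suc n)) x
     = (1 + n * x) * gf des_rec (simsun_words n) x + x * (1 - 2 * x) * gf_deriv des_rec (simsun_words n) x"
proof -
  have "gf des_rec (filter ndd_rec (insertions (Suc n) ys)) x
      = (1 + n * x) * x ^ des_rec ys + x * (1 - 2 * x) * (real (des_rec ys) * x ^ (des_rec ys - 1))"
    if "ys \<in> set (simsun_words n)" for ys
  proof -
    from that have ys: "ys \<in> set (perm_words n)" "simsun_word n ys" by (auto simp: simsun_words_def)
    then have "\<forall>a\<in>set ys. a < Suc n" "length ys = n"
      by (auto simp: set_perm_words length_perm_words)
    with simsun_word_imp_ndd_rec[OF ys] show ?thesis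
      by (simp add: gf_des_rec_ndd_insertions) (cases "des_rec ys"; simp add: algebra_simps)
  qed
  then show ?thesis
    unfolding simsun_words_Suc gf_concat map_map o_def gf_gf_deriv_combination[symmetric]
    by (intro arg_cong[where f = sum_list] map_cong) auto
qed

lemma gf_lpk_perm_words_Suc:
  "gf (lpk_after 0) (perm_words (Suc n)) y
     = (1 + n * y) * gf (lpk_after 0) (perm_words n) y + 2 * y * (1 - y) * gf_deriv (lpk_after 0) (perm_words n) y"
proof -
  have "gf (lpk_after 0) (insertions (Suc n) ys) y
      = (1 + n * y) * y ^ lpk_after 0 ys + 2 * y * (1 - y) * (real (lpk_after 0 ys) * y ^ (lpk_after 0 ys - 1))"
    if "ys \<in> set (perm_words n)" for ys
  proof -
    from that have "\<forall>a\<in>set ys. a < Suc n" "length ys = n"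
      by (auto simp: set_perm_words length_perm_words)
    then show ?thesis
      by (simp add: gf_lpk_after_insertions) (cases "lpk_after 0 ys"; simp add: algebra_simps)
  qed
  then show ?thesis
    unfolding perm_words.simps gf_concat map_map o_def gf_gf_deriv_combination[symmetric]
    by (intro arg_cong[where f = sum_list] map_cong) auto
qed

lemma binomial_convolution_Suc:
  fixes f g :: "nat \<Rightarrow> 'a :: comm_semiring_1"
  shows "(\<Sum>k=0..Suc n. of_nat (Suc n choose k) * f k * g (Suc n - k)) =
    (\<Sum>k=0..n. of_nat (n choose k) * (f (Suc k) * g (n - k) + f k * g (Suc n - k)))"
proof -
  have A: "(\<Sum>k=0..n. of_nat (n choose k) * f k * g (Suc n - k)) =
     f 0 * g (Suc n) + (\<Sum>k=0..n. of_nat (n choose Suc k) * f (Suc k) * g (n - k))"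
  proof -
    have "(\<Sum>k=0..n. of_nat (n choose k) * f k * g (Suc n - k)) = (\<Sum>k=0..Suc n. of_nat (n choose k) * f k * g (Suc n - k))"
      by (simp add: binomial_eq_0)
    also have "\<dots> = f 0 * g (Suc n) + (\<Sum>k=0..n. of_nat (n choose Suc k) * f (Suc k) * g (n - k))"
      by (subst sum.atLeast0_atMost_Suc_shift) simp
    finally show ?thesis .
  qed
  have "(\<Sum>k=0..Suc n. of_nat (Suc n choose k) * f k * g (Suc n - k)) =
     f 0 * g (Suc n) + (\<Sum>k=0..n. of_nat (Suc n choose Suc k) * f (Suc k) * g (n - k))"
    by (subst sum.atLeast0_atMost_Suc_shift) simp
  also have "\<dots> = f 0 * g (Suc n) + (\<Sum>k=0..n. of_nat (n choose k) * f (Suc k) * g (n - k))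
     + (\<Sum>k=0..n. of_nat (n choose Suc k) * f (Suc k) * g (n - k))"
    by (simp add: sum.distrib algebra_simps)
  also have "\<dots> = (\<Sum>k=0..n. of_nat (n choose k) * f (Suc k) * g (n - k)) + (\<Sum>k=0..n. of_nat (n choose k) * f k * g (Suc n - k))"
    by (simp only: A add_ac)
  also have "\<dots> = (\<Sum>k=0..n. of_nat (n choose k) * (f (Suc k) * g (n - k) + f k * g (Suc n - k)))"
    by (simp add: sum.distrib algebra_simps)
  finally show ?thesis .
qed

definition binomial_self_conv :: "(nat \<Rightarrow> real \<Rightarrow> real) \<Rightarrow> nat \<Rightarrow> real \<Rightarrow> real" where
  "binomial_self_conv F n x = (1 / 2 ^ n) * (\<Sum>k=0..n. real (n choose k) * F k (2 * x) * F (n - k) (2 * x))"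

definition binomial_self_conv_deriv ::
    "(nat \<Rightarrow> real \<Rightarrow> real) \<Rightarrow> (nat \<Rightarrow> real \<Rightarrow> real) \<Rightarrow> nat \<Rightarrow> real \<Rightarrow> real" where
  "binomial_self_conv_deriv F F' n x = (1 / 2 ^ n) *
     (\<Sum>k=0..n. real (n choose k) * (2 * F' k (2 * x) * F (n - k) (2 * x) + 2 * F k (2 * x) * F' (n - k) (2 * x)))"

lemma binomial_self_conv_has_real_derivative:
  assumes "\<And>k y. (F k has_real_derivative F' k y) (at y)"
  shows "(binomial_self_conv F n has_real_derivative binomial_self_conv_deriv F F' n x) (at x)"
proof -
  have F2: "((\<lambda>x. F k (2 * x)) has_real_derivative F' k (2 * x) * 2) (at x)" for k
    by (rule DERIV_chain2[OF assms]) (auto intro!: derivative_eq_intros)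
  have "((\<lambda>x. real (n choose k) * F k (2 * x) * F (n - k) (2 * x)) has_real_derivative
      real (n choose k) * (2 * F' k (2 * x) * F (n - k) (2 * x) + 2 * F k (2 * x) * F' (n - k) (2 * x))) (at x)" for k
    using DERIV_cmult[OF DERIV_mult[OF F2[of k] F2[of "n - k"]], of "real (n choose k)"]
    by (simp add: algebra_simps)
  then show ?thesis
    unfolding binomial_self_conv_def[abs_def] binomial_self_conv_deriv_def by (intro DERIV_cmult DERIV_sum)
qed

lemma binomial_self_conv_Suc:
  assumes F_Suc: "\<And>k y. F (Suc k) y = (1 + k * y) * F k y + 2 * y * (1 - y) * F' k y"
  shows "binomial_self_conv F (Suc n) x = (1 + n * x) * binomial_self_conv F n x + x * (1 - 2 * x) * binomial_self_conv_deriv F F' n x"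
proof -
  define G where "G k = F k (2 * x)" for k
  define G' where "G' k = F' k (2 * x)" for k
  define A where "A = (\<Sum>k=0..n. real (n choose k) * G k * G (n - k))"
  define B where "B = (\<Sum>k=0..n. real (n choose k) * (2 * G' k * G (n - k) + 2 * G k * G' (n - k)))"
  have G_Suc: "G (Suc k) = (1 + 2 * k * x) * G k + 4 * x * (1 - 2 * x) * G' k" for k
    unfolding G_def G'_def F_Suc by (simp add: algebra_simps)
  have "(\<Sum>k=0..Suc n. real (Suc n choose k) * G k * G (Suc n - k))
      = (\<Sum>k=0..n. real (n choose k) * (G (Suc k) * G (n - k) + G k * G (Suc n - k)))"
    by (rule binomial_convolution_Suc)
  also have "\<dots> = (\<Sum>k=0..n. (2 + 2 * n * x) * (real (n choose k) * G k * G (n - k)) +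
      2 * x * (1 - 2 * x) * (real (n choose k) * (2 * G' k * G (n - k) + 2 * G k * G' (n - k))))"
    by (intro sum.cong refl) (simp add: G_Suc Suc_diff_le of_nat_diff algebra_simps)
  also have "\<dots> = (2 + 2 * n * x) * A + 2 * x * (1 - 2 * x) * B"
    by (simp add: A_def B_def sum.distrib sum_distrib_left)
  finally have conv: "(\<Sum>k=0..Suc n. real (Suc n choose k) * G k * G (Suc n - k))
      = (2 + 2 * n * x) * A + 2 * x * (1 - 2 * x) * B" .
  show ?thesis
    unfolding binomial_self_conv_def binomial_self_conv_deriv_def G_def[symmetric] G'_def[symmetric]
      A_def[symmetric] B_def[symmetric] conv
    by (simp add: field_simps)
qed

lemma eq_if_same_differential_recurrence:
  fixes A B A' B' a b :: "nat \<Rightarrow> real \<Rightarrow> real"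
  assumes "\<And>n x. (A n has_real_derivative A' n x) (at x)"
    and "\<And>n x. (B n has_real_derivative B' n x) (at x)"
    and "A 0 = B 0"
    and "\<And>n x. A (Suc n) x = a n x * A n x + b n x * A' n x"
    and "\<And>n x. B (Suc n) x = a n x * B n x + b n x * B' n x"
  shows "A n = B n"
proof (induction n)
  case (Suc n)
  have "A' n x = B' n x" for x
    using DERIV_unique[OF assms(1)] assms(2) Suc.IH by metis
  with Suc.IH show ?case by (auto simp: assms(4,5))
qed (rule assms(3))

lemma gf_simsun_words_eq_binomial_self_conv:
  "gf des_rec (simsun_words n) = binomial_self_conv (\<lambda>k. gf (lpk_after 0) (perm_words k)) n"
proof (rule eq_if_same_differential_recurrence)
  show "gf des_rec (simsun_words 0) = binomial_self_conv (\<lambda>k. gf (lpk_after 0) (perm_words k)) 0"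
    by (simp add: gf_def binomial_self_conv_def simsun_words_def simsun_word_def fun_eq_iff)
qed (fact gf_has_real_derivative gf_simsun_words_Suc
       binomial_self_conv_has_real_derivative[OF gf_has_real_derivative]
       binomial_self_conv_Suc[OF gf_lpk_perm_words_Suc])+

lemma S_poly_eq_gf: "S_poly n x = gf des_rec (simsun_words n) x"
proof -
  let ?f = "\<lambda>w. if simsun_word n w then x ^ des_rec w else 0"
  have "S_poly n x = (\<Sum>p | p permutes {1..n}. if simsun n p then x ^ des n p else 0)"
    unfolding S_poly_def by (simp add: sum.inter_filter[symmetric] finite_permutations conj_commute)
  also have "\<dots> = (\<Sum>p | p permutes {1..n}. ?f (perm_word n p))"
    unfolding simsun_def simsun_word_def des_def des_word_eq_des_rec no_double_descent_iff_ndd_rec ..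
  also have "\<dots> = gf des_rec (simsun_words n) x"
    using sum_permutes_eq_sum_list_perm_words[of ?f n]
    by (simp add: gf_def simsun_words_def sum_list_map_filter')
  finally show ?thesis .
qed

lemma W_hat_eq_gf: "W_hat n y = gf (lpk_after 0) (perm_words n) y"
  unfolding W_hat_def lpk_eq_lpk_after gf_def
  using sum_permutes_eq_sum_list_perm_words[of "\<lambda>w. y ^ lpk_after 0 w" n] by simp

theorem mainTheorem2:
  fixes n :: nat and x :: real
  shows "S_poly n x = (1 / 2 ^ n) * (\<Sum>k=0..n. real (n choose k) * W_hat k (2*x) * W_hat (n-k) (2*x))"
  unfolding S_poly_eq_gf gf_simsun_words_eq_binomial_self_conv binomial_self_conv_def W_hat_eq_gf ..

end
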